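(* Let $(X_{1,\infty},f_{1,\infty})$ be a topological nonautonomous dynamical system such that the sequence $f_{1,\infty}$ is equicontinuous. Then $h_{\mathrm{top}}(f^{[k]}_{1,\infty})=k\cdot h_{\mathrm{top}}(f_{1,\infty})$ for all $k\ge1$.
   Context: Topological NDS: compact metric spaces $(X_n,\varrho_n)$, continuous $f_n:X_n\to X_{n+1}$; $f_k^n=f_{k+n-1}\circ\cdots\circ f_k$, $f_k^0=\mathrm{id}$. Equicontinuity: for every $\varepsilon>0$ there is $\delta>0$ with $\varrho_{n+1}(f_nx,f_ny)<\varepsilon$ whenever $\varrho_n(x,y)<\delta$, uniformly in $n$. Topological entropy: with $\varrho_{1,n}(x,y)=\max_{0\le i<n}\varrho_{1+i}(f_1^ix,f_1^iy)$, let $r_{\mathrm{sep}}(n,\varepsilon)$ be the maximal cardinality of a subset of $X_1$ whose distinct points have $\varrho_{1,n}$-distance $>\varepsilon$; $h_{\mathrm{top}}(f_{1,\infty})=\lim_{\varepsilon\searrow0}\limsup_n\frac1n\log r_{\mathrm{sep}}(n,\varepsilon)$. The $k$-th power system is $X^{[k]}_{1,\infty}=\{X_{(n-1)k+1}\}_{n\ge1}$ with maps $f^{[k]}_{1,\infty}=\{f^k_{(n-1)k+1}\}_{n\ge1}$. *)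

theory Defs
  imports "HOL-Analysis.Analysis"
begin

definition TNDS :: "(nat \<Rightarrow> 'a set) \<Rightarrow> (nat \<Rightarrow> 'a \<Rightarrow> 'a \<Rightarrow> real) \<Rightarrow> (nat \<Rightarrow> 'a \<Rightarrow> 'a) \<Rightarrow> bool" where
  "TNDS X d f \<longleftrightarrow> (\<forall>n\<ge>1. Metric_space (X n) (d n)
      \<and> compact_space (Metric_space.mtopology (X n) (d n))
      \<and> continuous_map (Metric_space.mtopology (X n) (d n))
                        (Metric_space.mtopology (X (Suc n)) (d (Suc n))) (f n))"

definition equicont_seq :: "(nat \<Rightarrow> 'a set) \<Rightarrow> (nat \<Rightarrow> 'a \<Rightarrow> 'a \<Rightarrow> real) \<Rightarrow> (nat \<Rightarrow> 'a \<Rightarrow> 'a) \<Rightarrow> bool" where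
  "equicont_seq X d f \<longleftrightarrow> (\<forall>\<epsilon>>0. \<exists>\<delta>>0. \<forall>n\<ge>1. \<forall>x\<in>X n. \<forall>y\<in>X n.
      d n x y < \<delta> \<longrightarrow> d (Suc n) (f n x) (f n y) < \<epsilon>)"

fun fiter :: "(nat \<Rightarrow> 'a \<Rightarrow> 'a) \<Rightarrow> nat \<Rightarrow> nat \<Rightarrow> 'a \<Rightarrow> 'a" where
  "fiter f k 0 = id"
| "fiter f k (Suc n) = f (k + n) \<circ> fiter f k n"

definition bowen_dist :: "(nat \<Rightarrow> 'a \<Rightarrow> 'a \<Rightarrow> real) \<Rightarrow> (nat \<Rightarrow> 'a \<Rightarrow> 'a) \<Rightarrow> nat \<Rightarrow> 'a \<Rightarrow> 'a \<Rightarrow> real" where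
  "bowen_dist d f n x y = Max ((\<lambda>i. d (1 + i) (fiter f 1 i x) (fiter f 1 i y)) ` {..<n})"

definition r_sep :: "(nat \<Rightarrow> 'a set) \<Rightarrow> (nat \<Rightarrow> 'a \<Rightarrow> 'a \<Rightarrow> real) \<Rightarrow> (nat \<Rightarrow> 'a \<Rightarrow> 'a) \<Rightarrow> nat \<Rightarrow> real \<Rightarrow> ereal" where
  "r_sep X d f n \<epsilon> = (SUP E\<in>{E. finite E \<and> E \<subseteq> X 1 \<and>
       (\<forall>x\<in>E. \<forall>y\<in>E. x \<noteq> y \<longrightarrow> bowen_dist d f n x y > \<epsilon>)}. ereal (real (card E)))"

definition ereal_ln :: "ereal \<Rightarrow> ereal" where
  "ereal_ln r = (if r = \<infinity> then \<infinity> else ereal (ln (real_of_ereal r)))"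

definition htop :: "(nat \<Rightarrow> 'a set) \<Rightarrow> (nat \<Rightarrow> 'a \<Rightarrow> 'a \<Rightarrow> real) \<Rightarrow> (nat \<Rightarrow> 'a \<Rightarrow> 'a) \<Rightarrow> ereal" where
  "htop X d f = Lim (at_right (0::real))
     (\<lambda>\<epsilon>. limsup (\<lambda>n. ereal_ln (r_sep X d f n \<epsilon>) / ereal (real n)))"

definition powX :: "nat \<Rightarrow> (nat \<Rightarrow> 'b) \<Rightarrow> nat \<Rightarrow> 'b" where
  "powX k X n = X ((n - 1) * k + 1)"

definition powf :: "nat \<Rightarrow> (nat \<Rightarrow> 'a \<Rightarrow> 'a) \<Rightarrow> nat \<Rightarrow> 'a \<Rightarrow> 'a" where
  "powf k f n = fiter f ((n - 1) * k + 1) k"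

end

theory Submission
  imports Defs
begin

text \<open>Blocks of \<open>k\<close> consecutive steps of the original system are single steps of the power
  system. Hence a set that is \<open>(n, \<epsilon>)\<close>-separated for the power system is \<open>(n k, \<epsilon>)\<close>-separated
  for the original one, which gives \<open>h(f\<^sup>[\<^sup>k\<^sup>]) \<le> k h(f)\<close>. Conversely, equicontinuity yields a
  \<open>\<delta>\<close> such that \<open>\<delta>\<close>-close points at the start of a block stay \<open>\<epsilon>\<close>-close during the whole block;
  so an \<open>(m, \<epsilon>)\<close>-separated set is \<open>(\<lceil>m/k\<rceil>, \<delta>/2)\<close>-separated for the power system, which gives
  the reverse inequality in the limit \<open>\<epsilon> \<rightarrow> 0\<close>.\<close>

lemma fiter_add: "fiter f j (m + n) = fiter f (j + m) n \<circ> fiter f j m"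
  by (induction n) (auto simp: add.assoc)

lemma fiter_powf: "fiter (powf k f) 1 i = fiter f 1 (i * k)"
proof (induction i)
  case (Suc i)
  have "fiter (powf k f) 1 (Suc i) = powf k f (1 + i) \<circ> fiter f 1 (i * k)"
    using Suc by simp
  also have "\<dots> = fiter f (1 + i * k) k \<circ> fiter f 1 (i * k)"
    by (simp add: powf_def)
  also have "\<dots> = fiter f 1 (i * k + k)"
    by (simp only: fiter_add)
  finally show ?case by (metis add.commute mult_Suc)
qed simp

lemma TNDS_maps_into:
  assumes "TNDS X d f" and "n \<ge> 1" and "x \<in> X n"
  shows "f n x \<in> X (Suc n)"
proof -
  have "continuous_map (Metric_space.mtopology (X n) (d n))
          (Metric_space.mtopology (X (Suc n)) (d (Suc n))) (f n)"
    and "Metric_space (X n) (d n)" and "Metric_space (X (Suc n)) (d (Suc n))"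
    using assms(1,2) unfolding TNDS_def by auto
  then show ?thesis
    using assms(3) unfolding continuous_map_def
    by (simp add: Metric_space.topspace_mtopology Pi_iff)
qed

lemma fiter_in:
  assumes "\<And>n x. n \<ge> 1 \<Longrightarrow> x \<in> X n \<Longrightarrow> f n x \<in> X (Suc n)"
    and "j \<ge> 1" and "x \<in> X j"
  shows "fiter f j i x \<in> X (j + i)"
  by (induction i) (use assms in auto)

lemma equicont_seq_fiter:
  assumes maps: "\<And>n x. n \<ge> 1 \<Longrightarrow> x \<in> X n \<Longrightarrow> f n x \<in> X (Suc n)"
    and equi: "equicont_seq X d f" and "\<epsilon> > 0"
  shows "\<exists>\<delta>>0. \<forall>i\<le>m. \<forall>j\<ge>1. \<forall>x\<in>X j. \<forall>y\<in>X j.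
           d j x y < \<delta> \<longrightarrow> d (j + i) (fiter f j i x) (fiter f j i y) < \<epsilon>"
  using \<open>\<epsilon> > 0\<close>
proof (induction m arbitrary: \<epsilon>)
  case 0
  then show ?case by (intro exI[of _ \<epsilon>]) auto
next
  case (Suc m)
  from equi Suc.prems obtain \<delta>\<^sub>1 where "\<delta>\<^sub>1 > 0" and step: "\<forall>n\<ge>1. \<forall>x\<in>X n. \<forall>y\<in>X n.
      d n x y < \<delta>\<^sub>1 \<longrightarrow> d (Suc n) (f n x) (f n y) < \<epsilon>"
    unfolding equicont_seq_def by blast
  from Suc.IH[of "min \<epsilon> \<delta>\<^sub>1"] Suc.prems \<open>\<delta>\<^sub>1 > 0\<close> obtain \<delta> where "\<delta> > 0"
    and close: "\<forall>i\<le>m. \<forall>j\<ge>1. \<forall>x\<in>X j. \<forall>y\<in>X j.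
      d j x y < \<delta> \<longrightarrow> d (j + i) (fiter f j i x) (fiter f j i y) < min \<epsilon> \<delta>\<^sub>1"
    by auto
  have "d (j + i) (fiter f j i x) (fiter f j i y) < \<epsilon>"
    if "i \<le> Suc m" "j \<ge> 1" "x \<in> X j" "y \<in> X j" "d j x y < \<delta>" for i j x y
  proof (cases "i \<le> m")
    case True
    then show ?thesis using close that by fastforce
  next
    case False
    then have "i = Suc m" using that(1) by simp
    moreover have "d (j + m) (fiter f j m x) (fiter f j m y) < \<delta>\<^sub>1"
      using close that by fastforce
    moreover have "fiter f j m x \<in> X (j + m)" "fiter f j m y \<in> X (j + m)"
      using fiter_in[of X f, OF maps] that by auto
    ultimately show ?thesis using step that(2) by simp
  qed
  then show ?case using \<open>\<delta> > 0\<close> by blast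
qed

lemma bowen_dist_powf:
  "bowen_dist (powX k d) (powf k f) n x y
     = Max ((\<lambda>i. d (i * k + 1) (fiter f 1 (i * k) x) (fiter f 1 (i * k) y)) ` {..<n})"
  unfolding bowen_dist_def powX_def fiter_powf by simp

lemma bowen_dist_powf_le:
  assumes "n \<ge> 1" and "k \<ge> 1"
  shows "bowen_dist (powX k d) (powf k f) n x y \<le> bowen_dist d f (n * k) x y"
  unfolding bowen_dist_powf unfolding bowen_dist_def
proof (rule Max_mono)
  show "(\<lambda>i. d (i * k + 1) (fiter f 1 (i * k) x) (fiter f 1 (i * k) y)) ` {..<n}
      \<subseteq> (\<lambda>i. d (1 + i) (fiter f 1 i x) (fiter f 1 i y)) ` {..<n * k}"
    using \<open>k \<ge> 1\<close> by (auto simp: add.commute intro!: rev_image_eqI)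
  show "(\<lambda>i. d (i * k + 1) (fiter f 1 (i * k) x) (fiter f 1 (i * k) y)) ` {..<n} \<noteq> {}"
    using \<open>n \<ge> 1\<close> by (simp add: lessThan_empty_iff)
qed simp

text \<open>Halving \<open>\<delta>\<close> turns the non-strict bound \<open>\<ge> \<delta>\<close> obtained at the start of a block into the
  strict separation required by \<open>r_sep\<close>.\<close>

lemma bowen_dist_powf_gt:
  assumes maps: "\<And>n x. n \<ge> 1 \<Longrightarrow> x \<in> X n \<Longrightarrow> f n x \<in> X (Suc n)"
    and "k \<ge> 1" and "\<delta> > 0"
    and close: "\<forall>i<k. \<forall>j\<ge>1. \<forall>x\<in>X j. \<forall>y\<in>X j.
      d j x y < \<delta> \<longrightarrow> d (j + i) (fiter f j i x) (fiter f j i y) < \<epsilon>"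
    and x: "x \<in> X 1" and y: "y \<in> X 1" and "m \<ge> 1"
    and sep: "bowen_dist d f m x y > \<epsilon>"
  shows "bowen_dist (powX k d) (powf k f) ((m - 1) div k + 1) x y > \<delta> / 2"
proof -
  have "{..<m} \<noteq> {}" using \<open>m \<ge> 1\<close> by (simp add: lessThan_empty_iff)
  then obtain j where "j < m" and far: "d (1 + j) (fiter f 1 j x) (fiter f 1 j y) > \<epsilon>"
    using sep unfolding bowen_dist_def by (subst (asm) Max_gr_iff) auto
  define q r where "q = j div k" and "r = j mod k"
  have j: "j = q * k + r" and "r < k"
    unfolding q_def r_def using \<open>k \<ge> 1\<close> by simp_all
  let ?x = "fiter f 1 (q * k) x" and ?y = "fiter f 1 (q * k) y"
  have "?x \<in> X (1 + q * k)" "?y \<in> X (1 + q * k)"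
    using fiter_in[of X f, OF maps _ x] fiter_in[of X f, OF maps _ y] by auto
  moreover have "d (1 + q * k + r) (fiter f (1 + q * k) r ?x) (fiter f (1 + q * k) r ?y) > \<epsilon>"
    using far fiter_add[of f 1 "q * k" r] by (simp add: j add.assoc)
  ultimately have "d (q * k + 1) ?x ?y \<ge> \<delta>"
    using close \<open>r < k\<close> by (fastforce simp: add.commute)
  moreover have "q < (m - 1) div k + 1"
    unfolding q_def using \<open>j < m\<close> by (simp add: div_le_mono less_Suc_eq_le)
  ultimately show ?thesis
    unfolding bowen_dist_powf using \<open>\<delta> > 0\<close>
    by (subst Max_gr_iff) (auto intro!: bexI[of _ q])
qed

lemma r_sep_mono:
  assumes "X' 1 = X 1"
    and "\<And>x y. x \<in> X 1 \<Longrightarrow> y \<in> X 1 \<Longrightarrow> bowen_dist d f n x y > \<epsilon>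
      \<Longrightarrow> bowen_dist d' f' n' x y > \<epsilon>'"
  shows "r_sep X d f n \<epsilon> \<le> r_sep X' d' f' n' \<epsilon>'"
  unfolding r_sep_def using assms by (intro SUP_subset_mono) (auto simp: subset_iff)

lemma r_sep_zero_or_ge_one: "r_sep X d f n \<epsilon> = 0 \<or> r_sep X d f n \<epsilon> \<ge> 1"
proof (cases "r_sep X d f n \<epsilon> = 0")
  case False
  let ?S = "{E. finite E \<and> E \<subseteq> X 1 \<and>
    (\<forall>x\<in>E. \<forall>y\<in>E. x \<noteq> y \<longrightarrow> bowen_dist d f n x y > \<epsilon>)}"
  have "0 \<le> r_sep X d f n \<epsilon>"
    unfolding r_sep_def by (rule SUP_upper2[of "{}"]) auto
  with False have "0 < r_sep X d f n \<epsilon>" by (simp add: less_le)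
  then have "\<exists>E\<in>?S. ereal (real (card E)) > 0"
    unfolding r_sep_def by (simp only: less_SUP_iff)
  then obtain E where "E \<in> ?S" and "ereal (real (card E)) > 0" ..
  then have "(1::ereal) \<le> ereal (real (card E))" by simp
  also have "\<dots> \<le> r_sep X d f n \<epsilon>"
    unfolding r_sep_def using \<open>E \<in> ?S\<close> by (rule SUP_upper)
  finally show ?thesis ..
qed simp

text \<open>Since \<open>ln 0 = 0\<close>, \<open>ereal_ln\<close> is monotone only on \<open>{0} \<union> [1, \<infinity>]\<close>, which is where
  \<open>r_sep\<close> takes its values.\<close>

lemma ereal_ln_mono:
  assumes "r = 0 \<or> r \<ge> 1" and "s = 0 \<or> s \<ge> 1" and "r \<le> s"
  shows "ereal_ln r \<le> ereal_ln s"
proof (cases "s = \<infinity>")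
  case False
  with assms obtain a b where "r = ereal a" "s = ereal b" "a = 0 \<or> a \<ge> 1" "b = 0 \<or> b \<ge> 1"
    by (cases r; cases s) auto
  then show ?thesis using assms(3) by (auto simp: ereal_ln_def)
qed (simp add: ereal_ln_def)

lemma ereal_ln_nonneg:
  assumes "r = 0 \<or> r \<ge> 1"
  shows "ereal_ln r \<ge> 0"
proof (cases "r = \<infinity>")
  case False
  with assms obtain a where "r = ereal a" "a = 0 \<or> a \<ge> 1"
    by (cases r) auto
  then show ?thesis by (auto simp: ereal_ln_def)
qed (simp add: ereal_ln_def)

lemma r_sep_powf_le:
  assumes "k \<ge> 1" and "n \<ge> 1"
  shows "r_sep (powX k X) (powX k d) (powf k f) n \<epsilon> \<le> r_sep X d f (n * k) \<epsilon>"
  using bowen_dist_powf_le[OF assms(2,1), of d f]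
  by (intro r_sep_mono) (auto simp: powX_def intro: less_le_trans)

lemma r_sep_le_powf:
  assumes maps: "\<And>n x. n \<ge> 1 \<Longrightarrow> x \<in> X n \<Longrightarrow> f n x \<in> X (Suc n)"
    and "k \<ge> 1" and "\<delta> > 0"
    and close: "\<forall>i<k. \<forall>j\<ge>1. \<forall>x\<in>X j. \<forall>y\<in>X j.
      d j x y < \<delta> \<longrightarrow> d (j + i) (fiter f j i x) (fiter f j i y) < \<epsilon>"
    and "m \<ge> 1"
  shows "r_sep X d f m \<epsilon> \<le> r_sep (powX k X) (powX k d) (powf k f) ((m - 1) div k + 1) (\<delta> / 2)"
  using bowen_dist_powf_gt[OF maps assms(2,3) close _ _ assms(5)]
  by (intro r_sep_mono) (auto simp: powX_def)

definition sep_growth :: "(nat \<Rightarrow> 'a set) \<Rightarrow> (nat \<Rightarrow> 'a \<Rightarrow> 'a \<Rightarrow> real) \<Rightarrow> (nat \<Rightarrow> 'a \<Rightarrow> 'a) \<Rightarrow> real \<Rightarrow> ereal"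
  where "sep_growth X d f \<epsilon> = limsup (\<lambda>n. ereal_ln (r_sep X d f n \<epsilon>) / ereal (real n))"

lemma ereal_ln_r_sep_divide_mono:
  assumes "r_sep X d f n \<epsilon> \<le> r_sep X' d' f' n' \<epsilon>'" and "m > 0"
  shows "ereal_ln (r_sep X d f n \<epsilon>) / ereal m \<le> ereal_ln (r_sep X' d' f' n' \<epsilon>') / ereal m"
  using assms by (intro ereal_divide_right_mono ereal_ln_mono r_sep_zero_or_ge_one) auto

lemma sep_growth_antimono:
  assumes "\<epsilon> \<le> \<epsilon>'"
  shows "sep_growth X d f \<epsilon>' \<le> sep_growth X d f \<epsilon>"
  unfolding sep_growth_def using assms
  by (intro Limsup_mono eventually_sequentiallyI[of 1] ereal_ln_r_sep_divide_mono r_sep_mono)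
    (auto intro: le_less_trans)

lemma Lim_at_right_0_antimono:
  fixes h :: "real \<Rightarrow> 'a::{complete_linorder, linorder_topology}"
  assumes antimono: "\<And>a b. 0 < a \<Longrightarrow> a \<le> b \<Longrightarrow> h b \<le> h a"
  shows "Lim (at_right 0) h = (SUP \<epsilon>\<in>{0<..}. h \<epsilon>)"
proof (rule tendsto_Lim)
  show "(h \<longlongrightarrow> (SUP \<epsilon>\<in>{0<..}. h \<epsilon>)) (at_right 0)"
  proof (rule order_tendstoI)
    fix a assume "a < (SUP \<epsilon>\<in>{0<..}. h \<epsilon>)"
    then obtain \<epsilon>\<^sub>0 where "\<epsilon>\<^sub>0 > 0" "a < h \<epsilon>\<^sub>0" by (auto simp: less_SUP_iff)
    then show "\<forall>\<^sub>F \<epsilon> in at_right 0. a < h \<epsilon>"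
      unfolding eventually_at_right_field
      using antimono by (intro exI[of _ \<epsilon>\<^sub>0]) (auto intro: less_le_trans)
  next
    fix a assume "(SUP \<epsilon>\<in>{0<..}. h \<epsilon>) < a"
    moreover have "h \<epsilon> \<le> (SUP \<epsilon>\<in>{0<..}. h \<epsilon>)" if "\<epsilon> > 0" for \<epsilon>
      using that by (intro SUP_upper) auto
    ultimately show "\<forall>\<^sub>F \<epsilon> in at_right 0. h \<epsilon> < a"
      unfolding eventually_at_right_field by (intro exI[of _ 1]) force
  qed
qed simp

lemma htop_eq_SUP_sep_growth: "htop X d f = (SUP \<epsilon>\<in>{0<..}. sep_growth X d f \<epsilon>)"
proof -
  have "htop X d f = Lim (at_right 0) (sep_growth X d f)"
    by (simp add: htop_def sep_growth_def[abs_def])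
  also have "\<dots> = (SUP \<epsilon>\<in>{0<..}. sep_growth X d f \<epsilon>)"
    by (rule Lim_at_right_0_antimono) (rule sep_growth_antimono)
  finally show ?thesis .
qed

lemma limsup_compose_filterlim_le:
  fixes a :: "nat \<Rightarrow> ereal"
  assumes "filterlim N sequentially sequentially"
  shows "limsup (\<lambda>m. a (N m)) \<le> limsup a"
proof -
  have "eventually (\<lambda>m. a (N m) < y) sequentially" if "limsup a < y" for y
    using Limsup_lessD[OF that] assms unfolding filterlim_iff by blast
  then show ?thesis using Limsup_le_iff by blast
qed

lemma ereal_divide_le_rescale:
  fixes y :: ereal and m c M :: real
  assumes "y \<ge> 0" and "0 < c" "c \<le> m" and "0 < M"
  shows "y / ereal m \<le> ereal (M / c) * (y / ereal M)"
proof (cases y)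
  case (real r)
  have "r / m \<le> r / c" using real assms by (intro divide_left_mono) auto
  moreover have "M / c * (r / M) = r / c" using \<open>M > 0\<close> by simp
  ultimately show ?thesis using real assms by simp
qed (use assms in simp_all)

lemma sep_growth_le_mult:
  assumes "k \<ge> 1"
    and r_sep_le: "\<And>n. n \<ge> 1 \<Longrightarrow> r_sep X' d' f' n \<epsilon>' \<le> r_sep X d f (n * k) \<epsilon>"
  shows "sep_growth X' d' f' \<epsilon>' \<le> ereal (real k) * sep_growth X d f \<epsilon>"
proof -
  let ?a = "\<lambda>n. ereal_ln (r_sep X d f n \<epsilon>) / ereal (real n)"
  have "ereal_ln (r_sep X' d' f' n \<epsilon>') / ereal (real n) \<le> ereal (real k) * ?a (n * k)"
    if "n \<ge> 1" for n
  proof -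
    have "ereal_ln (r_sep X' d' f' n \<epsilon>') / ereal (real n)
        \<le> ereal_ln (r_sep X d f (n * k) \<epsilon>) / ereal (real n)"
      using that by (intro ereal_ln_r_sep_divide_mono r_sep_le) auto
    also have "\<dots> = ereal (real k) * ?a (n * k)"
      using that \<open>k \<ge> 1\<close> by (cases "ereal_ln (r_sep X d f (n * k) \<epsilon>)") auto
    finally show ?thesis .
  qed
  then have "sep_growth X' d' f' \<epsilon>' \<le> limsup (\<lambda>n. ereal (real k) * ?a (n * k))"
    unfolding sep_growth_def by (intro Limsup_mono eventually_sequentiallyI)
  also have "\<dots> = ereal (real k) * limsup (?a \<circ> (\<lambda>n. n * k))"
    by (simp add: limsup_ereal_mult_left comp_def)
  also have "\<dots> \<le> ereal (real k) * sep_growth X d f \<epsilon>"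
    unfolding sep_growth_def using \<open>k \<ge> 1\<close>
    by (intro ereal_mult_left_mono limsup_subseq_mono) (auto simp: strict_mono_def)
  finally show ?thesis .
qed

lemma sep_growth_le_divide:
  assumes "k \<ge> 1"
    and r_sep_le: "\<And>m. m \<ge> 1 \<Longrightarrow> r_sep X d f m \<epsilon> \<le> r_sep X' d' f' ((m - 1) div k + 1) \<epsilon>'"
  shows "sep_growth X d f \<epsilon> \<le> ereal (1 / real k) * sep_growth X' d' f' \<epsilon>'"
proof -
  let ?b = "\<lambda>n. ereal_ln (r_sep X' d' f' n \<epsilon>') / ereal (real n)"
  define N where "N m = (m - 1) div k + 1" for m
  define g where "g n = 1 / (real k + (1 - real k) / real n)" for n :: nat
    \<comment> \<open>this is \<open>n / ((n - 1) k + 1)\<close> for \<open>n \<ge> 1\<close>, written so that its limit \<open>1 / k\<close> is evident\<close>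
  have g_eq: "g n = real n / real ((n - 1) * k + 1)" if "n \<ge> 1" for n
    using that by (simp add: g_def of_nat_diff field_simps)
  have "ereal_ln (r_sep X d f m \<epsilon>) / ereal (real m) \<le> ereal (g (N m)) * ?b (N m)"
    if "m \<ge> 1" for m
  proof -
    have "(m - 1) div k * k + 1 \<le> m"
      using that div_times_less_eq_dividend[of "m - 1" k] by linarith
    then have "(N m - 1) * k + 1 \<le> m" by (simp add: N_def)
    then have le_m: "real ((N m - 1) * k + 1) \<le> real m" by linarith
    have pos: "0 < real ((N m - 1) * k + 1)" by (simp only: of_nat_0_less_iff)
    have "ereal_ln (r_sep X d f m \<epsilon>) / ereal (real m)
        \<le> ereal_ln (r_sep X' d' f' (N m) \<epsilon>') / ereal (real m)"
      using that unfolding N_def by (intro ereal_ln_r_sep_divide_mono r_sep_le) auto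
    also have "\<dots> \<le> ereal (real (N m) / real ((N m - 1) * k + 1)) * ?b (N m)"
      using ereal_ln_nonneg[OF r_sep_zero_or_ge_one] le_m pos
      by (intro ereal_divide_le_rescale) (auto simp: N_def)
    also have "\<dots> = ereal (g (N m)) * ?b (N m)" by (simp add: g_eq N_def)
    finally show ?thesis .
  qed
  then have "sep_growth X d f \<epsilon> \<le> limsup (\<lambda>m. ereal (g (N m)) * ?b (N m))"
    unfolding sep_growth_def by (intro Limsup_mono eventually_sequentiallyI)
  also have "\<dots> \<le> limsup (\<lambda>n. ereal (g n) * ?b n)"
  proof (rule limsup_compose_filterlim_le)
    have "filterlim (\<lambda>m. (m - 1) div k) sequentially sequentially"
      using \<open>k \<ge> 1\<close> by (intro filterlim_compose[OF filterlim_at_top_div_const_nat]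
        filterlim_minus_const_nat_at_top) auto
    then show "filterlim N sequentially sequentially"
      unfolding N_def by (rule filterlim_compose[OF filterlim_add_const_nat_at_top])
  qed
  also have "\<dots> = ereal (1 / real k) * sep_growth X' d' f' \<epsilon>'"
    unfolding sep_growth_def
  proof (rule ereal_limsup_lim_mult)
    have "g \<longlonglongrightarrow> 1 / (real k + 0)"
      unfolding g_def using \<open>k \<ge> 1\<close> by (intro tendsto_intros lim_const_over_n) auto
    then show "(\<lambda>n. ereal (g n)) \<longlonglongrightarrow> ereal (1 / real k)" by (intro tendsto_ereal) simp
  qed (use \<open>k \<ge> 1\<close> in auto)
  finally show ?thesis .
qed

lemma SUP_eq_ereal_mult_if_mutually_bounded:
  fixes g h :: "'b \<Rightarrow> ereal" and c :: real
  assumes "c > 0"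
    and upper: "\<And>x. x \<in> A \<Longrightarrow> g x \<le> ereal c * h x"
    and lower: "\<And>x. x \<in> A \<Longrightarrow> \<exists>y\<in>A. h x \<le> ereal (1 / c) * g y"
  shows "(SUP x\<in>A. g x) = ereal c * (SUP x\<in>A. h x)"
proof (rule antisym)
  show "(SUP x\<in>A. g x) \<le> ereal c * (SUP x\<in>A. h x)"
  proof (rule SUP_least)
    fix x assume "x \<in> A"
    then have "g x \<le> ereal c * h x" by (rule upper)
    also have "\<dots> \<le> ereal c * (SUP x\<in>A. h x)"
      using \<open>x \<in> A\<close> \<open>c > 0\<close> by (intro ereal_mult_left_mono SUP_upper) auto
    finally show "g x \<le> ereal c * (SUP x\<in>A. h x)" .
  qed
  have "(SUP x\<in>A. h x) \<le> ereal (1 / c) * (SUP x\<in>A. g x)"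
  proof (rule SUP_least)
    fix x assume "x \<in> A"
    then obtain y where "y \<in> A" and "h x \<le> ereal (1 / c) * g y" using lower by blast
    note \<open>h x \<le> ereal (1 / c) * g y\<close>
    also have "ereal (1 / c) * g y \<le> ereal (1 / c) * (SUP x\<in>A. g x)"
      using \<open>y \<in> A\<close> \<open>c > 0\<close> by (intro ereal_mult_left_mono SUP_upper) auto
    finally show "h x \<le> ereal (1 / c) * (SUP x\<in>A. g x)" .
  qed
  then have "ereal c * (SUP x\<in>A. h x) \<le> ereal c * (ereal (1 / c) * (SUP x\<in>A. g x))"
    using \<open>c > 0\<close> by (intro ereal_mult_left_mono) auto
  also have "\<dots> = (SUP x\<in>A. g x)"
    using \<open>c > 0\<close> by (simp flip: mult.assoc)
  finally show "ereal c * (SUP x\<in>A. h x) \<le> (SUP x\<in>A. g x)" .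
qed

lemma sep_growth_le_divide_powf:
  assumes maps: "\<And>n x. n \<ge> 1 \<Longrightarrow> x \<in> X n \<Longrightarrow> f n x \<in> X (Suc n)"
    and "equicont_seq X d f" and "k \<ge> 1" and "\<epsilon> > 0"
  shows "\<exists>\<delta>>0. sep_growth X d f \<epsilon>
    \<le> ereal (1 / real k) * sep_growth (powX k X) (powX k d) (powf k f) \<delta>"
proof -
  obtain \<delta> where "\<delta> > 0" and "\<forall>i\<le>k. \<forall>j\<ge>1. \<forall>x\<in>X j. \<forall>y\<in>X j.
      d j x y < \<delta> \<longrightarrow> d (j + i) (fiter f j i x) (fiter f j i y) < \<epsilon>"
    using equicont_seq_fiter[OF maps assms(2,4)] by blast
  then have "\<forall>i<k. \<forall>j\<ge>1. \<forall>x\<in>X j. \<forall>y\<in>X j.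
      d j x y < \<delta> \<longrightarrow> d (j + i) (fiter f j i x) (fiter f j i y) < \<epsilon>"
    by simp
  with \<open>\<delta> > 0\<close> have "sep_growth X d f \<epsilon>
      \<le> ereal (1 / real k) * sep_growth (powX k X) (powX k d) (powf k f) (\<delta> / 2)"
    by (intro sep_growth_le_divide[OF assms(3)] r_sep_le_powf[of X f, OF maps assms(3)])
  then show ?thesis using \<open>\<delta> > 0\<close> by (intro exI[of _ "\<delta> / 2"]) simp
qed

theorem mainTheorem9:
  fixes X :: "nat \<Rightarrow> 'a set" and d :: "nat \<Rightarrow> 'a \<Rightarrow> 'a \<Rightarrow> real"
    and f :: "nat \<Rightarrow> 'a \<Rightarrow> 'a" and k :: nat
  assumes "TNDS X d f" and "equicont_seq X d f" and "k \<ge> 1"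
  shows "htop (powX k X) (powX k d) (powf k f) = ereal (real k) * htop X d f"
  unfolding htop_eq_SUP_sep_growth
proof (rule SUP_eq_ereal_mult_if_mutually_bounded)
  show "sep_growth (powX k X) (powX k d) (powf k f) \<epsilon> \<le> ereal (real k) * sep_growth X d f \<epsilon>"
    for \<epsilon>
    using assms(3) by (intro sep_growth_le_mult r_sep_powf_le)
  show "\<exists>\<delta>\<in>{0<..}. sep_growth X d f \<epsilon>
      \<le> ereal (1 / real k) * sep_growth (powX k X) (powX k d) (powf k f) \<delta>"
    if "\<epsilon> \<in> {0<..}" for \<epsilon>
  proof -
    from that have "\<epsilon> > 0" by simp
    with sep_growth_le_divide_powf[OF TNDS_maps_into[OF assms(1)] assms(2,3)] show ?thesis
      by fastforce
  qed
qed (use assms(3) in simp)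

end
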